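(* Let $s\ge 1$ be an integer and $0<\epsilon<1$ a constant. For integers $2\le n_0\le n_1\le\dots\le n_s$, let $k_i=\frac{\log n_s}{\log n_i}$ for $0\le i\le s-1$, let $x_0$ be the unique root of the equation $(s+\epsilon)x-1-\sum_{j=0}^{s-1}x^{\frac{k_j-1}{k_j}}=0$ in the interval $[1,\infty)$, and let $r=\left\lceil\frac{\log n_s}{\log x_0}\right\rceil+1$. Then $ch(K_{n_0,\dots,n_s})\le r$ for all such tuples with $n_s$ large enough (in terms of $s$ and $\epsilon$).
   Context: All logarithms are to base 2. For a graph $G=(V,E)$, the choice number $ch(G)$ is the minimum integer $k$ such that for every assignment of a list $S(v)$ of at least $k$ colors to each vertex $v\in V$, there is a proper vertex coloring of $G$ assigning to each vertex $v$ a color from $S(v)$. $K_{n_0,\dots,n_s}$ denotes the complete $(s+1)$-partite graph with parts of sizes $n_0,\dots,n_s$. *)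

theory Defs
  imports Complex_Main
begin

text \<open>A list assignment S gives each vertex a set of colours (colours are natural numbers; since
  graphs here are finite, this is no loss of generality).\<close>

definition choosable :: "'a set \<Rightarrow> ('a \<Rightarrow> 'a \<Rightarrow> bool) \<Rightarrow> nat \<Rightarrow> bool" where
  "choosable V E k \<longleftrightarrow>
     (\<forall>S :: 'a \<Rightarrow> nat set. (\<forall>v\<in>V. finite (S v) \<and> card (S v) \<ge> k) \<longrightarrow>
        (\<exists>c :: 'a \<Rightarrow> nat. (\<forall>v\<in>V. c v \<in> S v) \<and>
                          (\<forall>u\<in>V. \<forall>v\<in>V. E u v \<longrightarrow> c u \<noteq> c v)))"

definition choice_number :: "'a set \<Rightarrow> ('a \<Rightarrow> 'a \<Rightarrow> bool) \<Rightarrow> nat" where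
  "choice_number V E = (LEAST k. choosable V E k)"

text \<open>Complete (s+1)-partite graph K_{n_0,...,n_s}: vertices (i,j) with i \<le> s, j < n i;
  two vertices are adjacent iff they lie in different parts.\<close>
definition kmp_vertices :: "nat \<Rightarrow> (nat \<Rightarrow> nat) \<Rightarrow> (nat \<times> nat) set" where
  "kmp_vertices s n = {(i, j). i \<le> s \<and> j < n i}"

definition kmp_adj :: "(nat \<times> nat) \<Rightarrow> (nat \<times> nat) \<Rightarrow> bool" where
  "kmp_adj u v \<longleftrightarrow> fst u \<noteq> fst v"

end

theory Submission
  imports Defs "HOL-Library.FuncSet"
begin

(* Assign every colour independently to part j with probability p j and give each vertex a colour
   of its list that was assigned to its own part. A vertex of part j is stuck with probability at
   most (1 - p j)^r, so by the union bound the graph is r-choosable once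
   \<Sum>j. n j * (1 - p j)^r < 1. With e j = log (n j) / log (n s), the root x0 is exactly what
   makes q j = x0 powr (- e j) sum to s + \<epsilon> (note q s = 1 / x0), so p j = 1 - q j + \<epsilon> / (s + 1)
   is a probability distribution. Then n j * (1 - p j)^r \<le> (n s / x0^r) powr e j * (1 - \<epsilon> / (s + 1))^r,
   where the first factor is at most 1 by the choice of r, and the second is below 1 / (s + 1)
   once n s, and with it r, is large. *)

lemma sum_UN_le:
  fixes f :: "'a \<Rightarrow> 'b::ordered_ab_group_add"
  assumes "finite I" and "\<And>i. i \<in> I \<Longrightarrow> finite (A i)"
    and "\<And>x. x \<in> (\<Union>i\<in>I. A i) \<Longrightarrow> 0 \<le> f x"
  shows "sum f (\<Union>i\<in>I. A i) \<le> (\<Sum>i\<in>I. sum f (A i))"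
  using assms
proof (induction I rule: finite_induct)
  case empty
  then show ?case by simp
next
  case (insert i I)
  let ?U = "\<Union>j\<in>I. A j"
  have "sum f (A i \<union> ?U) = sum f (A i) + sum f ?U - sum f (A i \<inter> ?U)"
    using insert.hyps insert.prems by (simp add: sum_Un)
  also have "\<dots> \<le> sum f (A i) + sum f ?U"
    using insert.prems by (auto intro!: sum_nonneg)
  also have "\<dots> \<le> sum f (A i) + (\<Sum>j\<in>I. sum f (A j))"
    using insert.IH insert.prems by (simp add: add_left_mono)
  finally show ?case
    using insert.hyps by simp
qed

lemma ex_not_in_UN_if_weight_less:
  fixes W :: "'a \<Rightarrow> 'b::ordered_ab_group_add"
  assumes "finite P" and "finite I" and "\<And>i. i \<in> I \<Longrightarrow> B i \<subseteq> P"
    and "\<And>g. g \<in> P \<Longrightarrow> 0 \<le> W g"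
    and "(\<Sum>i\<in>I. sum W (B i)) < sum W P"
  shows "\<exists>g\<in>P. \<forall>i\<in>I. g \<notin> B i"
proof (rule ccontr)
  assume "\<not> ?thesis"
  then have "P = (\<Union>i\<in>I. B i)"
    using assms(3) by blast
  moreover have "sum W (\<Union>i\<in>I. B i) \<le> (\<Sum>i\<in>I. sum W (B i))"
    using assms(1-4) by (intro sum_UN_le) (auto intro: finite_subset)
  ultimately show False
    using assms(5) by simp
qed

lemma sum_prod_PiE_avoiding:
  fixes p :: "'b \<Rightarrow> real"
  assumes "finite C" and "finite J" and "T \<subseteq> C" and "j \<in> J" and "sum p J = 1"
  shows "(\<Sum>g\<in>PiE C (\<lambda>c. if c \<in> T then J - {j} else J). \<Prod>c\<in>C. p (g c)) = (1 - p j) ^ card T"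
proof -
  have "(\<Sum>g\<in>PiE C (\<lambda>c. if c \<in> T then J - {j} else J). \<Prod>c\<in>C. p (g c)) =
        (\<Prod>c\<in>C. \<Sum>i\<in>(if c \<in> T then J - {j} else J). p i)"
    using assms(1,2) by (subst prod_sum_PiE) auto
  also have "\<dots> = (\<Prod>c\<in>C. if c \<in> T then 1 - p j else 1)"
    using assms(2,4,5) by (intro prod.cong) (auto simp: sum_diff1)
  also have "\<dots> = (1 - p j) ^ card T"
    using assms(1,3) by (simp add: prod.If_cases Int_absorb1)
  finally show ?thesis .
qed

lemma ex_assignment_meeting_all_lists:
  fixes part :: "'a \<Rightarrow> 'b" and p :: "'b \<Rightarrow> real" and S :: "'a \<Rightarrow> 'c set"
  assumes "finite V" and "finite J" and part: "part ` V \<subseteq> J"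
    and p_nonneg: "\<And>j. j \<in> J \<Longrightarrow> 0 \<le> p j" and p_sum: "sum p J = 1"
    and S: "\<forall>v\<in>V. finite (S v) \<and> k \<le> card (S v)"
    and bound: "(\<Sum>v\<in>V. (1 - p (part v)) ^ k) < 1"
  shows "\<exists>g. \<forall>v\<in>V. \<exists>c\<in>S v. g c = part v"
proof -
  \<comment> \<open>Counting with weights instead of probabilities: W g is the probability that the colours
    are sent to the parts according to g, and B v is the event that no colour of S v is sent to
    the part of v.\<close>
  define C where "C = \<Union>(S ` V)"
  define W where "W g = (\<Prod>c\<in>C. p (g c))" for g
  define B where "B v = PiE C (\<lambda>c. if c \<in> S v then J - {part v} else J)" for v
  have "finite C"
    using \<open>finite V\<close> S unfolding C_def by blast
  have "sum W (PiE C (\<lambda>_. J)) = (\<Prod>c\<in>C. sum p J)"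
    unfolding W_def using \<open>finite C\<close> \<open>finite J\<close> by (subst prod_sum_PiE) auto
  then have total: "sum W (PiE C (\<lambda>_. J)) = 1"
    using p_sum by simp
  have bad: "sum W (B v) \<le> (1 - p (part v)) ^ k" if "v \<in> V" for v
  proof -
    have j: "part v \<in> J"
      using part that by blast
    have "p (part v) \<le> sum p J"
      using j p_nonneg \<open>finite J\<close> by (intro member_le_sum) auto
    then have p_le_1: "p (part v) \<le> 1"
      using p_sum by simp
    have "S v \<subseteq> C"
      using that unfolding C_def by blast
    have "sum W (B v) = (1 - p (part v)) ^ card (S v)"
      unfolding B_def W_def using \<open>finite C\<close> \<open>finite J\<close> \<open>S v \<subseteq> C\<close> j p_sum
      by (rule sum_prod_PiE_avoiding)
    also have "\<dots> \<le> (1 - p (part v)) ^ k"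
      using S that p_le_1 p_nonneg[OF j] by (intro power_decreasing) auto
    finally show ?thesis .
  qed
  have "(\<Sum>v\<in>V. sum W (B v)) \<le> (\<Sum>v\<in>V. (1 - p (part v)) ^ k)"
    by (intro sum_mono bad)
  then have "(\<Sum>v\<in>V. sum W (B v)) < sum W (PiE C (\<lambda>_. J))"
    using bound total by linarith
  then obtain g where g: "g \<in> PiE C (\<lambda>_. J)" and good: "\<forall>v\<in>V. g \<notin> B v"
    using ex_not_in_UN_if_weight_less[of "PiE C (\<lambda>_. J)" V B W] \<open>finite V\<close> \<open>finite C\<close> \<open>finite J\<close>
    unfolding B_def W_def
    by (auto simp: finite_PiE PiE_mono intro!: prod_nonneg p_nonneg)
  have "\<exists>c\<in>S v. g c = part v" if "v \<in> V" for v
    using g good that unfolding B_def by (fastforce simp: PiE_iff split: if_splits)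
  then show ?thesis
    by blast
qed

lemma choosable_if_part_weights:
  fixes part :: "'a \<Rightarrow> 'b" and p :: "'b \<Rightarrow> real"
  assumes "finite V" and "finite J" and "part ` V \<subseteq> J"
    and proper: "\<And>u v. u \<in> V \<Longrightarrow> v \<in> V \<Longrightarrow> E u v \<Longrightarrow> part u \<noteq> part v"
    and "\<And>j. j \<in> J \<Longrightarrow> 0 \<le> p j" and "sum p J = 1"
    and "(\<Sum>v\<in>V. (1 - p (part v)) ^ k) < 1"
  shows "choosable V E k"
  unfolding choosable_def
proof (intro allI impI)
  fix S :: "'a \<Rightarrow> nat set"
  assume S: "\<forall>v\<in>V. finite (S v) \<and> k \<le> card (S v)"
  obtain g where "\<forall>v\<in>V. \<exists>c\<in>S v. g c = part v"
    using ex_assignment_meeting_all_lists[OF assms(1-3,5,6) S assms(7)] by blast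
  then obtain col where "\<forall>v\<in>V. col v \<in> S v \<and> g (col v) = part v"
    by metis
  then show "\<exists>col. (\<forall>v\<in>V. col v \<in> S v) \<and> (\<forall>u\<in>V. \<forall>v\<in>V. E u v \<longrightarrow> col u \<noteq> col v)"
    using proper by metis
qed

lemma choosable_complete_multipartite:
  fixes p :: "nat \<Rightarrow> real"
  assumes "\<And>j. j \<le> s \<Longrightarrow> 0 \<le> p j" and "(\<Sum>j\<le>s. p j) = 1"
    and "(\<Sum>j\<le>s. real (n j) * (1 - p j) ^ k) < 1"
  shows "choosable (kmp_vertices s n) kmp_adj k"
proof (rule choosable_if_part_weights[where part = fst and J = "{..s}"])
  have V: "kmp_vertices s n = Sigma {..s} (\<lambda>j. {..<n j})"
    unfolding kmp_vertices_def by auto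
  show "finite (kmp_vertices s n)"
    unfolding V by simp
  have "(\<Sum>v\<in>kmp_vertices s n. (1 - p (fst v)) ^ k) = (\<Sum>j\<le>s. \<Sum>i<n j. (1 - p j) ^ k)"
    unfolding V by (subst sum.Sigma) (auto simp: split_beta)
  then show "(\<Sum>v\<in>kmp_vertices s n. (1 - p (fst v)) ^ k) < 1"
    using assms(3) by simp
qed (use assms(1,2) in \<open>auto simp: kmp_vertices_def kmp_adj_def\<close>)

lemma root_eq_iff_divided:
  fixes b :: "nat \<Rightarrow> real"
  assumes "0 < x"
  shows "(s + \<epsilon>) * x - 1 - (\<Sum>j<s. x powr b j) = 0 \<longleftrightarrow>
         1 / x + (\<Sum>j<s. x powr (b j - 1)) = s + \<epsilon>"
proof -
  have "x powr b j = x * x powr (b j - 1)" for j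
    using assms by (simp add: powr_diff)
  then have "(s + \<epsilon>) * x - 1 - (\<Sum>j<s. x powr b j) =
             x * (s + \<epsilon> - 1 / x - (\<Sum>j<s. x powr (b j - 1)))"
    using assms by (simp add: algebra_simps sum_distrib_left)
  then show ?thesis
    using assms by auto
qed

lemma root_bounds:
  fixes b :: "nat \<Rightarrow> real"
  assumes "0 < \<epsilon>" and "\<epsilon> < 1" and "\<And>j. j < s \<Longrightarrow> b j \<le> 1"
    and "x \<ge> 1" and "(s + \<epsilon>) * x - 1 - (\<Sum>j<s. x powr b j) = 0"
  shows "1 < x" and "x \<le> 1 / \<epsilon>"
proof -
  have div: "1 / x + (\<Sum>j<s. x powr (b j - 1)) = s + \<epsilon>"
    using assms(4,5) root_eq_iff_divided by simp
  show "1 < x"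
    using div assms(2,4) by (cases "x = 1") auto
  have "x powr (b j - 1) \<le> x powr 0" if "j < s" for j
    using assms(3)[OF that] assms(4) by (intro powr_mono) auto
  then have "(\<Sum>j<s. x powr (b j - 1)) \<le> (\<Sum>j<s. 1)"
    using assms(4) by (intro sum_mono) simp
  then have "\<epsilon> \<le> 1 / x"
    using div by simp
  then show "x \<le> 1 / \<epsilon>"
    using assms(1,4) by (simp add: field_simps)
qed

lemma root_ge_one_unique:
  fixes b :: "nat \<Rightarrow> real"
  assumes b: "\<And>j. j < s \<Longrightarrow> b j \<le> 1"
    and "1 \<le> x" "(s + \<epsilon>) * x - 1 - (\<Sum>j<s. x powr b j) = 0"
    and "1 \<le> y" "(s + \<epsilon>) * y - 1 - (\<Sum>j<s. y powr b j) = 0"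
  shows "x = y"
proof -
  define g where "g x = 1 / x + (\<Sum>j<s. x powr (b j - 1))" for x :: real
  have g_decreasing: "g v < g u" if "1 \<le> u" "u < v" for u v
  proof -
    have "v powr (b j - 1) \<le> u powr (b j - 1)" if "j < s" for j
      using b[OF that] \<open>1 \<le> u\<close> \<open>u < v\<close> by (intro powr_mono2') auto
    then have "(\<Sum>j<s. v powr (b j - 1)) \<le> (\<Sum>j<s. u powr (b j - 1))"
      by (intro sum_mono) auto
    moreover have "1 / v < 1 / u"
      using that by (simp add: frac_less2)
    ultimately show ?thesis
      unfolding g_def by linarith
  qed
  have "g x = s + \<epsilon>" "g y = s + \<epsilon>"
    using assms(2-5) root_eq_iff_divided unfolding g_def by auto
  then show ?thesis
    using g_decreasing[of x y] g_decreasing[of y x] assms(2,4) by fastforce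
qed

lemma ex1_root_ge_one:
  fixes b :: "nat \<Rightarrow> real"
  assumes "0 < \<epsilon>" and "\<epsilon> < 1" and b: "\<And>j. j < s \<Longrightarrow> b j \<le> 1"
  shows "\<exists>!x. x \<ge> 1 \<and> (s + \<epsilon>) * x - 1 - (\<Sum>j<s. x powr b j) = 0"
proof -
  define f where "f x = (s + \<epsilon>) * x - 1 - (\<Sum>j<s. x powr b j)" for x
  have "f (1 / \<epsilon>) \<ge> 0"
  proof -
    have "(1 / \<epsilon>) powr b j \<le> (1 / \<epsilon>) powr 1" if "j < s" for j
      using b[OF that] assms(1,2) by (intro powr_mono) auto
    then have "(\<Sum>j<s. (1 / \<epsilon>) powr b j) \<le> (\<Sum>j<s. 1 / \<epsilon>)"
      using assms(1) by (intro sum_mono) auto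
    then show ?thesis
      unfolding f_def using assms(1) by (simp add: field_simps)
  qed
  moreover have "f 1 \<le> 0"
    unfolding f_def using assms(2) by simp
  moreover have "continuous_on {1..1 / \<epsilon>} f"
    unfolding f_def by (intro continuous_intros) auto
  ultimately obtain x where "1 \<le> x" "f x = 0"
    using IVT'[of f 1 0 "1 / \<epsilon>"] assms(1,2) by auto
  then show ?thesis
    using root_ge_one_unique[where s = s and b = b and \<epsilon> = \<epsilon>, OF b] unfolding f_def by blast
qed

lemma root_weights:
  fixes e :: "nat \<Rightarrow> real"
  assumes eps: "0 < \<epsilon>" "\<epsilon> < 1"
    and e: "\<And>j. j \<le> s \<Longrightarrow> 0 \<le> e j \<and> e j \<le> 1" and e_s: "e s = 1"
    and root: "x0 \<ge> 1" "(s + \<epsilon>) * x0 - 1 - (\<Sum>j<s. x0 powr (1 - e j)) = 0"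
  shows "(\<Sum>j\<le>s. x0 powr (- e j)) = s + \<epsilon>"
    and "j \<le> s \<Longrightarrow> \<epsilon> \<le> x0 powr (- e j) \<and> x0 powr (- e j) \<le> 1"
proof -
  have x0: "1 < x0" "x0 \<le> 1 / \<epsilon>"
    using root_bounds[of \<epsilon> s "\<lambda>j. 1 - e j"] eps e root by auto
  have "1 / x0 + (\<Sum>j<s. x0 powr (- e j)) = s + \<epsilon>"
    using root root_eq_iff_divided[of x0 s \<epsilon> "\<lambda>j. 1 - e j"] by simp
  moreover have "x0 powr (- e s) = 1 / x0"
    unfolding e_s using x0 by (simp add: powr_minus divide_inverse)
  ultimately show "(\<Sum>j\<le>s. x0 powr (- e j)) = s + \<epsilon>"
    by (simp add: lessThan_Suc_atMost[symmetric])
  assume "j \<le> s"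
  have "\<epsilon> \<le> x0 powr (-1)"
    using x0 eps by (simp add: powr_minus field_simps)
  also have "\<dots> \<le> x0 powr (- e j)"
    using powr_mono[of "-1" "- e j" x0] e[OF \<open>j \<le> s\<close>] x0 by simp
  finally show "\<epsilon> \<le> x0 powr (- e j) \<and> x0 powr (- e j) \<le> 1"
    using powr_mono[of "- e j" 0 x0] e[OF \<open>j \<le> s\<close>] x0 by simp
qed

lemma mult_power_diff_le:
  fixes a q \<delta> :: real
  assumes "0 \<le> \<delta>" and "\<delta> \<le> q" and "q \<le> 1" and "0 \<le> a" and "a * q ^ k \<le> 1"
  shows "a * (q - \<delta>) ^ k \<le> (1 - \<delta>) ^ k"
proof -
  have "q - \<delta> \<le> q * (1 - \<delta>)"
    using assms(1,3) by (simp add: algebra_simps mult_left_le)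
  then have "(q - \<delta>) ^ k \<le> q ^ k * (1 - \<delta>) ^ k"
    using assms(2) by (simp add: power_mono flip: power_mult_distrib)
  then have "a * (q - \<delta>) ^ k \<le> a * q ^ k * (1 - \<delta>) ^ k"
    using assms(4) by (simp add: mult_left_mono mult.assoc)
  also have "\<dots> \<le> (1 - \<delta>) ^ k"
    using assms by (intro mult_left_le_one_le) auto
  finally show ?thesis .
qed

lemma choosable_complete_multipartite_of_root:
  fixes e :: "nat \<Rightarrow> real" and n :: "nat \<Rightarrow> nat"
  assumes eps: "0 < \<epsilon>" "\<epsilon> < 1"
    and e: "\<And>j. j \<le> s \<Longrightarrow> 0 \<le> e j \<and> e j \<le> 1" and e_s: "e s = 1"
    and root: "x0 \<ge> 1" "(s + \<epsilon>) * x0 - 1 - (\<Sum>j<s. x0 powr (1 - e j)) = 0"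
    and size: "\<And>j. j \<le> s \<Longrightarrow> real (n j) \<le> (x0 ^ k) powr e j"
    and k: "(1 - \<epsilon> / (s + 1)) ^ k < 1 / (s + 1)"
  shows "choosable (kmp_vertices s n) kmp_adj k"
proof -
  define \<delta> where "\<delta> = \<epsilon> / (s + 1)"
  define q where "q j = x0 powr (- e j)" for j
  have x0: "1 < x0"
    using root_bounds[of \<epsilon> s "\<lambda>j. 1 - e j"] eps e root by auto
  have q_sum: "(\<Sum>j\<le>s. q j) = s + \<epsilon>"
    using root_weights(1)[OF eps e e_s root] unfolding q_def .
  have q_le_1: "q j \<le> 1" and eps_le_q: "\<epsilon> \<le> q j" if "j \<le> s" for j
    using root_weights(2)[OF eps e e_s root that] unfolding q_def by auto
  have \<delta>: "0 < \<delta>" "\<delta> \<le> \<epsilon>"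
    unfolding \<delta>_def using eps by (auto simp: field_simps)
  have part_term: "real (n j) * (q j - \<delta>) ^ k < 1 / (s + 1)" if j: "j \<le> s" for j
  proof -
    have "q j ^ k = (x0 ^ k) powr (- e j)"
      using x0 unfolding q_def by (simp add: powr_realpow[symmetric] powr_powr mult.commute)
    then have "real (n j) * q j ^ k \<le> (x0 ^ k) powr e j * (x0 ^ k) powr (- e j)"
      using size[OF j] by (simp add: mult_right_mono)
    also have "\<dots> = 1"
      using x0 by (simp add: powr_add[symmetric])
    finally have "real (n j) * q j ^ k \<le> 1" .
    then have "real (n j) * (q j - \<delta>) ^ k \<le> (1 - \<delta>) ^ k"
      using q_le_1[OF j] eps_le_q[OF j] \<delta> by (intro mult_power_diff_le) auto
    then show ?thesis
      using k unfolding \<delta>_def by linarith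
  qed
  show ?thesis
  proof (rule choosable_complete_multipartite[where p = "\<lambda>j. 1 - q j + \<delta>"])
    show "0 \<le> 1 - q j + \<delta>" if "j \<le> s" for j
      using q_le_1[OF that] \<delta> by linarith
    show "(\<Sum>j\<le>s. 1 - q j + \<delta>) = 1"
      using q_sum unfolding \<delta>_def by (simp add: sum.distrib sum_subtractf)
    have "(\<Sum>j\<le>s. real (n j) * (1 - (1 - q j + \<delta>)) ^ k) < (\<Sum>j\<le>s. 1 / (s + 1))"
      using part_term by (intro sum_strict_mono) auto
    then show "(\<Sum>j\<le>s. real (n j) * (1 - (1 - q j + \<delta>)) ^ k) < 1"
      by simp
  qed
qed

lemma le_power_if_log_ratio_le:
  fixes x m :: real
  assumes "1 < x" and "0 < m" and "0 < b" and "b \<noteq> 1"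
    and "log b m / log b x \<le> real R"
  shows "m \<le> x ^ R"
proof -
  have "m = x powr (log b m / log b x)"
    using assms(1-4) by (simp add: log_base_change[symmetric])
  also have "\<dots> \<le> x powr real R"
    using assms(1,5) by (intro powr_mono) auto
  finally show ?thesis
    using assms(1) by (simp add: powr_realpow)
qed

lemma le_powr_log_ratio:
  fixes a c y :: real
  assumes "1 < a" and "1 \<le> c" and "a \<le> y" and "0 < b" and "b \<noteq> 1"
  shows "c \<le> y powr (log b c / log b a)"
proof -
  have "c = a powr (log b c / log b a)"
    using assms by (simp add: log_base_change[symmetric])
  also have "\<dots> \<le> y powr (log b c / log b a)"
    using assms by (intro powr_mono2) (auto simp: log_base_change[symmetric])
  finally show ?thesis .
qed

lemma the_root_part_sizes:
  fixes s :: nat and \<epsilon> :: real and n :: "nat \<Rightarrow> nat"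
  defines "k \<equiv> \<lambda>i. log 2 (n s) / log 2 (n i)"
  defines "e \<equiv> \<lambda>j. log 2 (n j) / log 2 (n s)"
  defines "x0 \<equiv> THE x :: real. x \<ge> 1 \<and> (s + \<epsilon>) * x - 1 - (\<Sum>j<s. x powr ((k j - 1) / k j)) = 0"
  assumes eps: "0 < \<epsilon>" "\<epsilon> < 1" and n: "\<And>j. j \<le> s \<Longrightarrow> 2 \<le> n j \<and> n j \<le> n s"
  shows "x0 \<ge> 1" and "(s + \<epsilon>) * x0 - 1 - (\<Sum>j<s. x0 powr (1 - e j)) = 0"
    and "1 < x0" and "x0 \<le> 1 / \<epsilon>"
proof -
  have log_pos: "0 < log 2 (n j)" if "j \<le> s" for j
    using n[OF that] by simp
  have "(k j - 1) / k j = 1 - e j" if "j < s" for j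
    using log_pos[of j] log_pos[of s] that unfolding k_def e_def by (simp add: field_simps)
  then have "(\<Sum>j<s. x powr ((k j - 1) / k j)) = (\<Sum>j<s. x powr (1 - e j))" for x
    by (intro sum.cong) auto
  then have "x0 = (THE x. x \<ge> 1 \<and> (s + \<epsilon>) * x - 1 - (\<Sum>j<s. x powr (1 - e j)) = 0)"
    unfolding x0_def by (simp only:)
  moreover have exponent_le_1: "1 - e j \<le> 1" if "j < s" for j
    using log_pos[of j] log_pos[of s] that unfolding e_def by simp
  ultimately show root: "x0 \<ge> 1" "(s + \<epsilon>) * x0 - 1 - (\<Sum>j<s. x0 powr (1 - e j)) = 0"
    using theI'[OF ex1_root_ge_one[of \<epsilon> s "\<lambda>j. 1 - e j"]] eps by auto
  show "1 < x0" and "x0 \<le> 1 / \<epsilon>"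
    using root_bounds[of \<epsilon> s "\<lambda>j. 1 - e j", OF eps exponent_le_1 root] by auto
qed

lemma choosable_complete_multipartite_of_part_sizes:
  fixes s k :: nat and \<epsilon> x0 :: real and n :: "nat \<Rightarrow> nat"
  defines "e \<equiv> \<lambda>j. log 2 (n j) / log 2 (n s)"
  assumes eps: "0 < \<epsilon>" "\<epsilon> < 1" and n: "\<And>j. j \<le> s \<Longrightarrow> 2 \<le> n j \<and> n j \<le> n s"
    and root: "x0 \<ge> 1" "(s + \<epsilon>) * x0 - 1 - (\<Sum>j<s. x0 powr (1 - e j)) = 0"
    and k: "n s \<le> x0 ^ k" "(1 - \<epsilon> / (s + 1)) ^ k < 1 / (s + 1)"
  shows "choosable (kmp_vertices s n) kmp_adj k"
proof (rule choosable_complete_multipartite_of_root[OF eps _ _ root _ k(2)])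
  have log_pos: "0 < log 2 (n j)" if "j \<le> s" for j
    using n[OF that] by simp
  show "0 \<le> e j \<and> e j \<le> 1" if "j \<le> s" for j
    using n[OF that] log_pos[OF that] log_pos[of s] unfolding e_def by simp
  show "e s = 1"
    using log_pos[of s] unfolding e_def by simp
  show "real (n j) \<le> (x0 ^ k) powr e j" if "j \<le> s" for j
    unfolding e_def using n[OF that] n[of s] k(1) by (intro le_powr_log_ratio) auto
qed

lemma choice_number_complete_multipartite_le:
  fixes s M :: nat and \<epsilon> :: real and n :: "nat \<Rightarrow> nat"
  defines "k \<equiv> \<lambda>i. log 2 (n s) / log 2 (n i)"
  defines "x0 \<equiv> THE x :: real. x \<ge> 1 \<and> (s + \<epsilon>) * x - 1 - (\<Sum>j<s. x powr ((k j - 1) / k j)) = 0"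
  assumes eps: "0 < \<epsilon>" "\<epsilon> < 1"
    and n: "2 \<le> n 0" "\<forall>i<s. n i \<le> n (Suc i)"
    and M: "(1 - \<epsilon> / (s + 1)) ^ M < 1 / (s + 1)" "(1 / \<epsilon>) ^ M \<le> n s"
  shows "int (choice_number (kmp_vertices s n) kmp_adj) \<le> \<lceil>log 2 (n s) / log 2 x0\<rceil> + 1"
proof -
  have n_bounds: "2 \<le> n j \<and> n j \<le> n s" if "j \<le> s" for j
  proof -
    have "n 0 \<le> n j" "n j \<le> n s"
      by (rule lift_Suc_mono_le_ivl[of "{..<s}"]; use n(2) that in auto)+
    then show ?thesis
      using n(1) by simp
  qed
  have x0: "x0 \<ge> 1" "(s + \<epsilon>) * x0 - 1 - (\<Sum>j<s. x0 powr (1 - log 2 (n j) / log 2 (n s))) = 0"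
    "1 < x0" "x0 \<le> 1 / \<epsilon>"
    using the_root_part_sizes[of \<epsilon> s n, OF eps n_bounds] unfolding x0_def k_def by auto
  define R where "R = nat (\<lceil>log 2 (n s) / log 2 x0\<rceil> + 1)"
  have "0 < log 2 (n s) / log 2 x0"
    using n_bounds[of s] x0(3) by simp
  then have R: "real R = \<lceil>log 2 (n s) / log 2 x0\<rceil> + 1"
    unfolding R_def by (simp add: add_nonneg_nonneg)
  then have "log 2 (n s) / log 2 x0 \<le> real R"
    using le_of_int_ceiling[of "log 2 (n s) / log 2 x0"] by linarith
  then have n_s: "n s \<le> x0 ^ R"
    using n_bounds[of s] x0(3) by (intro le_power_if_log_ratio_le[where b = 2]) auto
  have "(1 / \<epsilon>) ^ M \<le> (1 / \<epsilon>) ^ R"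
    using M(2) n_s power_mono[of x0 "1 / \<epsilon>" R] x0(3,4) by linarith
  then have "M \<le> R"
    using eps by (simp add: power_le_imp_le_exp)
  have "0 \<le> 1 - \<epsilon> / (s + 1)" and "1 - \<epsilon> / (s + 1) \<le> 1"
    using eps by (auto simp: field_simps)
  then have "(1 - \<epsilon> / (s + 1)) ^ R \<le> (1 - \<epsilon> / (s + 1)) ^ M"
    using \<open>M \<le> R\<close> by (intro power_decreasing)
  then have "choosable (kmp_vertices s n) kmp_adj R"
    using choosable_complete_multipartite_of_part_sizes[OF eps n_bounds x0(1,2) n_s] M(1)
    by linarith
  then have "choice_number (kmp_vertices s n) kmp_adj \<le> R"
    unfolding choice_number_def by (rule Least_le)
  then show ?thesis
    using R by linarith
qed

theorem theorem5:
  fixes s :: nat and \<epsilon> :: real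
  assumes "s \<ge> 1" and "0 < \<epsilon>" and "\<epsilon> < 1"
  shows "\<exists>N :: nat. \<forall>n :: nat \<Rightarrow> nat.
           (2 \<le> n 0 \<and> (\<forall>i<s. n i \<le> n (Suc i)) \<and> n s \<ge> N) \<longrightarrow>
           (let k = (\<lambda>i. log 2 (n s) / log 2 (n i));
                x0 = (THE x :: real. x \<ge> 1 \<and>
                        (s + \<epsilon>) * x - 1 - (\<Sum>j<s. x powr ((k j - 1) / k j)) = 0);
                r = \<lceil>log 2 (n s) / log 2 x0\<rceil> + 1
            in int (choice_number (kmp_vertices s n) kmp_adj) \<le> r)"
proof -
  obtain M where M: "(1 - \<epsilon> / (s + 1)) ^ M < 1 / (s + 1)"
    using real_arch_pow_inv[of "1 / (s + 1)" "1 - \<epsilon> / (s + 1)"] assms(2,3)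
    by (auto simp: field_simps)
  show ?thesis
  proof (intro exI[of _ "nat \<lceil>(1 / \<epsilon>) ^ M\<rceil>"] allI impI)
    fix n :: "nat \<Rightarrow> nat"
    assume n: "2 \<le> n 0 \<and> (\<forall>i<s. n i \<le> n (Suc i)) \<and> nat \<lceil>(1 / \<epsilon>) ^ M\<rceil> \<le> n s"
    have "(1 / \<epsilon>) ^ M \<le> n s"
      using n by linarith
    with n show "let k = (\<lambda>i. log 2 (n s) / log 2 (n i));
                x0 = (THE x :: real. x \<ge> 1 \<and>
                        (s + \<epsilon>) * x - 1 - (\<Sum>j<s. x powr ((k j - 1) / k j)) = 0);
                r = \<lceil>log 2 (n s) / log 2 x0\<rceil> + 1
            in int (choice_number (kmp_vertices s n) kmp_adj) \<le> r"
      unfolding Let_def using choice_number_complete_multipartite_le[OF assms(2,3) _ _ M] by simp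
  qed
qed

end
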